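(* Let $G$ be a $2$-connected graph and $x,y\in V(G)$. Suppose $G\setminus\{x,y\}$ has $k\ge2$ components and $\{x,y\}$ is not an admissible $2$-cut of $G$. Then (1) if $k\ge3$, $G\cong K_{2,3}$; (2) if $k=2$ and $xy\in E(G)$, $G\cong K_4\setminus e$; (3) if $k=2$ and $xy\notin E(G)$, at least one component of $G\setminus\{x,y\}$ is a single vertex.
   Context: Graphs are finite and simple. 2-sum: for $i=1,2$ let $G_i$ be disjoint graphs and $z_i\in V(G_i)$ incident with exactly two edges $x_iz_i,y_iz_i$; let $G_i'=G_i\setminus z_i$ if $x_iy_i\notin E(G_i)$ and $G_i'=G_i\setminus z_i\setminus x_iy_i$ otherwise. A 2-sum over $z_1,z_2$ is obtained from $G_1',G_2'$ by identifying $x_1$ with $x_2$ and $y_1$ with $y_2$ and then, if $x_iy_i\in E(G_i)$ for at least one $i$, adding an edge between the two identified vertices, which are called the joins. Two vertices $x,y$ of a $2$-connected graph $G$ form an admissible $2$-cut if $G$ is a 2-sum of two graphs, each having fewer edges than $G$, whose set of joins is $\{x,y\}$. *)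

theory Defs
  imports Main
begin

definition graph :: "'a set \<Rightarrow> 'a set set \<Rightarrow> bool" where
  "graph V E \<longleftrightarrow> finite V \<and> (\<forall>e\<in>E. \<exists>u v. e = {u, v} \<and> u \<noteq> v \<and> u \<in> V \<and> v \<in> V)"

definition adj :: "'a set set \<Rightarrow> ('a \<times> 'a) set" where
  "adj E = {(u, v). {u, v} \<in> E}"

text \<open>Induced subgraph on the vertices outside S (i.e. G minus S).\<close>
definition del_edges :: "'a set set \<Rightarrow> 'a set \<Rightarrow> 'a set set" where
  "del_edges E S = {e \<in> E. e \<inter> S = {}}"

definition connected_graph :: "'a set \<Rightarrow> 'a set set \<Rightarrow> bool" where
  "connected_graph V E \<longleftrightarrow> (\<forall>u\<in>V. \<forall>v\<in>V. (u, v) \<in> (adj E)\<^sup>*)"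

definition components :: "'a set \<Rightarrow> 'a set set \<Rightarrow> 'a set set" where
  "components V E = V // {(u, v). u \<in> V \<and> v \<in> V \<and> (u, v) \<in> (adj E)\<^sup>*}"

definition two_connected :: "'a set \<Rightarrow> 'a set set \<Rightarrow> bool" where
  "two_connected V E \<longleftrightarrow> card V \<ge> 3 \<and> connected_graph V E \<and>
     (\<forall>v\<in>V. connected_graph (V - {v}) (del_edges E {v}))"

definition graph_iso :: "'a set \<Rightarrow> 'a set set \<Rightarrow> 'b set \<Rightarrow> 'b set set \<Rightarrow> ('a \<Rightarrow> 'b) \<Rightarrow> bool" where
  "graph_iso V E V' E' f \<longleftrightarrow> bij_betw f V V' \<and>
     (\<forall>u\<in>V. \<forall>v\<in>V. {u, v} \<in> E \<longleftrightarrow> {f u, f v} \<in> E')"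

definition isomorphic :: "'a set \<Rightarrow> 'a set set \<Rightarrow> 'b set \<Rightarrow> 'b set set \<Rightarrow> bool" where
  "isomorphic V E V' E' \<longleftrightarrow> (\<exists>f. graph_iso V E V' E' f)"

definition K23_V :: "nat set" where "K23_V = {0..4}"
definition K23_E :: "nat set set" where
  "K23_E = {{i, j} | i j. i \<in> {0, 1} \<and> j \<in> {2, 3, 4}}"
definition K4e_V :: "nat set" where "K4e_V = {0..3}"
definition K4e_E :: "nat set set" where
  "K4e_E = {{i, j} | i j. i \<in> {0..3} \<and> j \<in> {0..3} \<and> i \<noteq> j} - {{0, 1}}"

definition sum_vertex :: "'a set \<Rightarrow> 'a set set \<Rightarrow> 'a \<Rightarrow> 'a \<Rightarrow> 'a \<Rightarrow> bool" where
  "sum_vertex V E z x y \<longleftrightarrow> z \<in> V \<and> x \<noteq> y \<and> {e \<in> E. z \<in> e} = {{x, z}, {y, z}}"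

definition prime_edges :: "'a set set \<Rightarrow> 'a \<Rightarrow> 'a \<Rightarrow> 'a \<Rightarrow> 'a set set" where
  "prime_edges E z x y = {e \<in> E. z \<notin> e} - {{x, y}}"

text \<open>The 2-sum over z1, z2, realised on the disjoint union type 'b + 'c: the vertex x2 is
  identified with x1 and y2 with y1 (represented by Inl x1, Inl y1); the joins are
  Inl x1 and Inl y1.\<close>
definition glue2 :: "'c \<Rightarrow> 'c \<Rightarrow> 'b \<Rightarrow> 'b \<Rightarrow> 'c \<Rightarrow> 'b + 'c" where
  "glue2 x2 y2 x1 y1 v = (if v = x2 then Inl x1 else if v = y2 then Inl y1 else Inr v)"

definition two_sum_V :: "'b set \<Rightarrow> 'b \<Rightarrow> 'b \<Rightarrow> 'b \<Rightarrow> 'c set \<Rightarrow> 'c \<Rightarrow> 'c \<Rightarrow> 'c \<Rightarrow> ('b + 'c) set" where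
  "two_sum_V V1 z1 x1 y1 V2 z2 x2 y2 =
     Inl ` (V1 - {z1}) \<union> glue2 x2 y2 x1 y1 ` (V2 - {z2})"

definition two_sum_E :: "'b set set \<Rightarrow> 'b \<Rightarrow> 'b \<Rightarrow> 'b \<Rightarrow> 'c set set \<Rightarrow> 'c \<Rightarrow> 'c \<Rightarrow> 'c \<Rightarrow> ('b + 'c) set set" where
  "two_sum_E E1 z1 x1 y1 E2 z2 x2 y2 =
     (image Inl) ` prime_edges E1 z1 x1 y1 \<union>
     (image (glue2 x2 y2 x1 y1)) ` prime_edges E2 z2 x2 y2 \<union>
     (if {x1, y1} \<in> E1 \<or> {x2, y2} \<in> E2 then {{Inl x1, Inl y1}} else {})"

text \<open>Summands are taken as graphs on nat (every finite graph is isomorphic to one).\<close>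
definition admissible_2cut :: "'a set \<Rightarrow> 'a set set \<Rightarrow> 'a \<Rightarrow> 'a \<Rightarrow> bool" where
  "admissible_2cut V E x y \<longleftrightarrow> two_connected V E \<and>
     (\<exists>(V1 :: nat set) E1 z1 x1 y1 (V2 :: nat set) E2 z2 x2 y2 f.
        graph V1 E1 \<and> graph V2 E2 \<and>
        sum_vertex V1 E1 z1 x1 y1 \<and> sum_vertex V2 E2 z2 x2 y2 \<and>
        card E1 < card E \<and> card E2 < card E \<and>
        graph_iso (two_sum_V V1 z1 x1 y1 V2 z2 x2 y2) (two_sum_E E1 z1 x1 y1 E2 z2 x2 y2) V E f \<and>
        f ` {Inl x1, Inl y1} = {x, y})"

end

theory Submission
  imports Defs
begin

text \<open>Distribute the components of \<open>G - {x, y}\<close> between two sides \<open>A\<close> and \<open>B\<close>. If both sides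
  carry at least three edges of \<open>G\<close> (the edge \<open>xy\<close> counting for \<open>A\<close>), then \<open>G\<close> is the 2-sum of
  the two sides, each completed by a new vertex adjacent to \<open>x\<close> and \<open>y\<close>, so \<open>{x, y}\<close> is
  admissible. By 2-connectivity each component sends an edge to \<open>x\<close> and one to \<open>y\<close>, so it carries
  at least two edges, and at least three if it has two vertices. If \<open>{x, y}\<close> is not admissible,
  every distribution fails, which leaves three single-vertex components and no edge \<open>xy\<close>
  (\<open>K\<^sub>2\<^sub>,\<^sub>3\<close>), two single-vertex components and the edge \<open>xy\<close> (\<open>K\<^sub>4 - e\<close>), or, without \<open>xy\<close>,
  two components at least one of which is a single vertex.\<close>

section \<open>Graphs, isomorphisms and connected components\<close>

lemma graph_edgeE:
  assumes "graph V E" "e \<in> E"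
  obtains u v where "e = {u, v}" "u \<noteq> v" "u \<in> V" "v \<in> V"
  using assms unfolding graph_def by blast

lemma graph_edges_subset: "graph V E \<Longrightarrow> E \<subseteq> Pow V"
  by (auto elim: graph_edgeE)

lemma graph_finite_edges: "graph V E \<Longrightarrow> finite E"
  by (meson finite_Pow_iff finite_subset graph_def graph_edges_subset)

lemma graph_iso_image:
  assumes "inj_on f V" "E \<subseteq> Pow V"
  shows "graph_iso V E (f ` V) ((`) f ` E) f"
proof -
  have "{u, v} \<in> E \<longleftrightarrow> {f u, f v} \<in> (`) f ` E" if "u \<in> V" "v \<in> V" for u v
    using inj_on_image_mem_iff[OF inj_on_image_Pow[OF assms(1)], of "{u, v}" E] that assms(2)
    by simp
  then show ?thesis
    unfolding graph_iso_def using assms(1) by (simp add: bij_betw_def)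
qed

lemma isomorphicI:
  assumes "inj_on f V" "E \<subseteq> Pow V" "f ` V = V'" "(`) f ` E = E'"
  shows "isomorphic V E V' E'"
  using graph_iso_image[OF assms(1,2)] assms(3,4) unfolding isomorphic_def by blast

lemma graph_iso_left_inverse:
  assumes "E \<subseteq> Pow V" and inv: "\<And>v. v \<in> V \<Longrightarrow> f (h v) = v"
  shows "graph_iso (h ` V) ((`) h ` E) V E f"
proof -
  have "inj_on f (h ` V)"
    by (rule inj_onI) (use inv in auto)
  moreover have "(`) h ` E \<subseteq> Pow (h ` V)"
    using assms(1) by auto
  moreover have "f ` h ` V = V"
    using inv by (force simp: image_image)
  moreover have "(`) f ` (`) h ` E = E"
  proof -
    have "f ` h ` e = e" if "e \<in> E" for e
      using that assms(1) inv by (force simp: image_image)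
    then show ?thesis by (simp add: image_image)
  qed
  ultimately show ?thesis
    using graph_iso_image[of f "h ` V" "(`) h ` E"] by simp
qed

lemma image_edges_comp_cong:
  assumes "\<And>v. v \<in> \<Union>F \<Longrightarrow> h (g v) = k v"
  shows "(`) h ` (`) g ` F = (`) k ` F"
proof -
  have "h ` g ` e = k ` e" if "e \<in> F" for e
    unfolding image_image using that assms by (intro image_cong) auto
  then show ?thesis
    unfolding image_image by (rule image_cong[OF refl])
qed

lemma rtrancl_exits_set:
  assumes "(a, b) \<in> r\<^sup>*" "a \<in> S" "b \<notin> S"
  shows "\<exists>u w. (u, w) \<in> r \<and> u \<in> S \<and> w \<notin> S"
  using assms by (induction rule: rtrancl_induct) auto

lemma sym_adj: "sym (adj F)"
  by (auto intro: symI simp: adj_def insert_commute)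

lemma equiv_reachable:
  "equiv W {(u, v). u \<in> W \<and> v \<in> W \<and> (u, v) \<in> (adj F)\<^sup>*}"
proof (rule equivI)
  show "{(u, v). u \<in> W \<and> v \<in> W \<and> (u, v) \<in> (adj F)\<^sup>*} \<subseteq> W \<times> W"
    by auto
  show "refl_on W {(u, v). u \<in> W \<and> v \<in> W \<and> (u, v) \<in> (adj F)\<^sup>*}"
    by (auto simp: refl_on_def)
  show "sym {(u, v). u \<in> W \<and> v \<in> W \<and> (u, v) \<in> (adj F)\<^sup>*}"
    using sym_rtrancl[OF sym_adj, of F] by (auto simp: sym_def)
  show "trans {(u, v). u \<in> W \<and> v \<in> W \<and> (u, v) \<in> (adj F)\<^sup>*}"
    by (auto intro: transI rtrancl_trans)
qed

lemma components_subset: "C \<in> components W F \<Longrightarrow> C \<subseteq> W"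
  unfolding components_def by (rule in_quotient_imp_subset[OF equiv_reachable])

lemma components_nonempty: "C \<in> components W F \<Longrightarrow> C \<noteq> {}"
  unfolding components_def by (rule in_quotient_imp_non_empty[OF equiv_reachable])

lemma components_disjoint:
  "C \<in> components W F \<Longrightarrow> D \<in> components W F \<Longrightarrow> C \<noteq> D \<Longrightarrow> C \<inter> D = {}"
  unfolding components_def using quotient_disj[OF equiv_reachable] by blast

lemma Union_components: "\<Union> (components W F) = W"
  unfolding components_def by (rule Union_quotient[OF equiv_reachable])

lemma finite_components: "finite W \<Longrightarrow> finite (components W F)"
  unfolding components_def by (rule finite_quotient) auto

lemma components_reachable_closed:
  assumes C: "C \<in> components W F" and "u \<in> C" "v \<in> W" "(u, v) \<in> (adj F)\<^sup>*"
  shows "v \<in> C"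
proof -
  from C obtain a where "C = {(u, v). u \<in> W \<and> v \<in> W \<and> (u, v) \<in> (adj F)\<^sup>*} `` {a}"
    unfolding components_def by (rule quotientE)
  with assms(2-4) show ?thesis
    using rtrancl_trans[of a u "adj F" v] by blast
qed

lemma components_reachable:
  assumes C: "C \<in> components W F" and "u \<in> C" "v \<in> C"
  shows "(u, v) \<in> (adj F)\<^sup>*"
proof -
  from C obtain a where "C = {(u, v). u \<in> W \<and> v \<in> W \<and> (u, v) \<in> (adj F)\<^sup>*} `` {a}"
    unfolding components_def by (rule quotientE)
  with assms(2,3) have "(a, u) \<in> (adj F)\<^sup>*" "(a, v) \<in> (adj F)\<^sup>*"
    by auto
  then show ?thesis
    using sym_rtrancl[OF sym_adj, of F] rtrancl_trans[of u a "adj F" v] by (auto simp: sym_def)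
qed

lemma card_components_connected:
  assumes "connected_graph W F"
  shows "card (components W F) \<le> 1"
proof -
  have "C = W" if C: "C \<in> components W F" for C
  proof -
    obtain u where "u \<in> C" using components_nonempty[OF C] by blast
    then show ?thesis
      using assms components_subset[OF C] components_reachable_closed[OF C]
      unfolding connected_graph_def by blast
  qed
  then have "components W F \<subseteq> {W}" by blast
  then show ?thesis
    using card_mono[of "{W}"] by fastforce
qed

lemma components_edge_closed:
  assumes "C \<in> components W F" "u \<in> C" "v \<in> W" "{u, v} \<in> F"
  shows "v \<in> C"
proof -
  have "(u, v) \<in> adj F"
    using assms(4) by (simp add: adj_def)
  then show ?thesis
    using components_reachable_closed[OF assms(1-3)] by blast
qed

lemma del_edgesI: "e \<in> E \<Longrightarrow> e \<inter> S = {} \<Longrightarrow> e \<in> del_edges E S"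
  unfolding del_edges_def by simp

lemma cut_component_has_neighbour:
  assumes graph: "graph V E" and conn: "connected_graph (V - {y}) (del_edges E {y})"
    and C: "C \<in> components (V - {x, y}) (del_edges E {x, y})" and "x \<in> V" "x \<noteq> y"
  shows "\<exists>u\<in>C. {u, x} \<in> E"
proof -
  obtain a where a: "a \<in> C"
    using components_nonempty[OF C] by blast
  have C_sub: "C \<subseteq> V - {x, y}"
    using components_subset[OF C] .
  then have "(a, x) \<in> (adj (del_edges E {y}))\<^sup>*"
    using conn a assms(4,5) unfolding connected_graph_def by blast
  then obtain u w where uw: "(u, w) \<in> adj (del_edges E {y})" "u \<in> C" "w \<notin> C"
    using rtrancl_exits_set[of a x _ C] a C_sub by blast
  then have e: "{u, w} \<in> E" "y \<notin> {u, w}"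
    unfolding adj_def del_edges_def by auto
  then have "w \<in> V"
    using graph_edges_subset[OF graph] by blast
  have "w = x"
  proof (rule ccontr)
    assume "w \<noteq> x"
    then have "{u, w} \<in> del_edges E {x, y}"
      using e uw(2) C_sub by (intro del_edgesI) auto
    then have "w \<in> C"
      using components_edge_closed[OF C uw(2)] \<open>w \<in> V\<close> \<open>w \<noteq> x\<close> e(2) by blast
    with uw(3) show False ..
  qed
  with uw(2) e(1) show ?thesis by blast
qed

section \<open>2-sums along a split at two vertices\<close>

definition side_edges :: "'a set set \<Rightarrow> 'a \<Rightarrow> 'a \<Rightarrow> 'a set \<Rightarrow> 'a set set" where
  "side_edges E x y S = {e \<in> E. e \<subseteq> S \<union> {x, y}} - {{x, y}}"

lemma side_edges_mono: "S \<subseteq> T \<Longrightarrow> side_edges E x y S \<subseteq> side_edges E x y T"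
  unfolding side_edges_def by blast

lemma side_edges_disjoint:
  assumes "graph V E" "S \<inter> T = {}"
  shows "side_edges E x y S \<inter> side_edges E x y T = {}"
proof -
  have "e = {x, y}" if "e \<in> E" "e \<subseteq> {x, y}" for e
    using that assms(1) by (auto elim: graph_edgeE)
  then show ?thesis
    using assms(2) unfolding side_edges_def by blast
qed

lemma card_edges_within:
  assumes "finite E"
  shows "card {e \<in> E. e \<subseteq> S \<union> {x, y}} = card (side_edges E x y S) + (if {x, y} \<in> E then 1 else 0)"
proof (cases "{x, y} \<in> E")
  case True
  then have "{x, y} \<in> {e \<in> E. e \<subseteq> S \<union> {x, y}}" by simp
  then show ?thesis
    using card.remove[of "{e \<in> E. e \<subseteq> S \<union> {x, y}}" "{x, y}"] assms True
    unfolding side_edges_def by simp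
qed (simp add: side_edges_def)

lemma admissible_2cutI:
  fixes V1 V2 :: "nat set"
  assumes "two_connected V E" "graph V1 E1" "graph V2 E2"
    "sum_vertex V1 E1 z1 x1 y1" "sum_vertex V2 E2 z2 x2 y2"
    "card E1 < card E" "card E2 < card E"
    "graph_iso (two_sum_V V1 z1 x1 y1 V2 z2 x2 y2) (two_sum_E E1 z1 x1 y1 E2 z2 x2 y2) V E f"
    "f ` {Inl x1, Inl y1} = {x, y}"
  shows "admissible_2cut V E x y"
  unfolding admissible_2cut_def using assms by blast

locale pair_split =
  fixes V :: "'a set" and E :: "'a set set" and x y :: 'a and A B :: "'a set"
  assumes graph: "graph V E" and x_in: "x \<in> V" and y_in: "y \<in> V" and x_ne_y: "x \<noteq> y"
    and disjoint: "A \<inter> B = {}" and cover: "A \<union> B = V - {x, y}"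
    and edge_sides: "\<And>e. e \<in> E \<Longrightarrow> e \<subseteq> A \<union> {x, y} \<or> e \<subseteq> B \<union> {x, y}"
begin

definition EA :: "'a set set" where "EA = {e \<in> E. e \<subseteq> A \<union> {x, y}}"

abbreviation EB :: "'a set set" where "EB \<equiv> side_edges E x y B"

lemma edges_split: "E = EA \<union> EB"
  using edge_sides unfolding EA_def side_edges_def by blast

lemma card_edges_split: "card E = card EA + card EB"
proof -
  have "EA \<inter> EB = {}"
    using side_edges_disjoint[OF graph disjoint, of x y] unfolding EA_def side_edges_def by blast
  then show ?thesis
    using graph_finite_edges[OF graph] edges_split card_Un_disjoint
    by (metis finite_Un)
qed

end

text \<open>The two summands are the sides together with \<open>x, y\<close> and a fresh vertex \<open>n\<close> adjacent to
  both, transported to \<open>nat\<close> along the injection \<open>g\<close> (summands of an admissible 2-cut are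
  graphs on \<open>nat\<close>). Their 2-sum is \<open>G\<close> again, via \<open>lift\<close>.\<close>

locale pair_split_embedding = pair_split +
  fixes g :: "'a \<Rightarrow> nat" and n :: nat
  assumes inj_g: "inj_on g V" and fresh: "n \<notin> g ` V"
begin

definition summand_V :: "'a set \<Rightarrow> nat set" where
  "summand_V C = insert n (g ` (C \<union> {x, y}))"

definition summand_E :: "'a set set \<Rightarrow> nat set set" where
  "summand_E F = (`) g ` F \<union> {{g x, n}, {g y, n}}"

definition lift :: "'a \<Rightarrow> nat + nat" where
  "lift v = (if v \<in> B then Inr (g v) else Inl (g v))"

definition unlift :: "nat + nat \<Rightarrow> 'a" where
  "unlift = case_sum (the_inv_into V g) (the_inv_into V g)"

lemma edges_Pow: "E \<subseteq> Pow V"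
  using graph_edges_subset[OF graph] .

lemma joins_distinct: "g x \<noteq> g y" "g x \<noteq> n" "g y \<noteq> n"
  using inj_g x_in y_in x_ne_y fresh by (auto dest: inj_onD)

lemma fresh_edge: "F \<subseteq> E \<Longrightarrow> e \<in> (`) g ` F \<Longrightarrow> n \<notin> e"
  using edges_Pow fresh by blast

lemma inj_on_image_edges: "inj_on ((`) g) E"
  using inj_on_image_Pow[OF inj_g] edges_Pow by (rule inj_on_subset)

lemma graph_summand:
  assumes "C \<subseteq> V" "F \<subseteq> {e \<in> E. e \<subseteq> C \<union> {x, y}}"
  shows "graph (summand_V C) (summand_E F)"
  unfolding graph_def
proof (intro conjI ballI)
  show "finite (summand_V C)"
    unfolding summand_V_def using assms(1) graph finite_subset by (auto simp: graph_def)
next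
  fix e assume "e \<in> summand_E F"
  then consider e' where "e' \<in> F" "e = g ` e'" | "e = {g x, n}" | "e = {g y, n}"
    unfolding summand_E_def by blast
  then show "\<exists>u v. e = {u, v} \<and> u \<noteq> v \<and> u \<in> summand_V C \<and> v \<in> summand_V C"
  proof cases
    case 1
    then obtain u v where uv: "e' = {u, v}" "u \<noteq> v" "u \<in> V" "v \<in> V"
      using assms(2) graph by (blast elim: graph_edgeE)
    then have "g u \<noteq> g v"
      using inj_g by (auto dest: inj_onD)
    moreover have "u \<in> C \<union> {x, y}" "v \<in> C \<union> {x, y}"
      using 1 uv assms(2) by auto
    ultimately show ?thesis
      using 1 uv unfolding summand_V_def by blast
  qed (use joins_distinct in \<open>auto simp: summand_V_def\<close>)
qed

lemma sum_vertex_summand: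
  assumes "F \<subseteq> E"
  shows "sum_vertex (summand_V C) (summand_E F) n (g x) (g y)"
proof -
  have "{e \<in> summand_E F. n \<in> e} = {{g x, n}, {g y, n}}"
    unfolding summand_E_def using fresh_edge[OF assms] by blast
  then show ?thesis
    unfolding sum_vertex_def summand_V_def using joins_distinct(1) by simp
qed

lemma card_summand_E:
  assumes "F \<subseteq> E"
  shows "card (summand_E F) = card F + 2"
proof -
  have "card ((`) g ` F) = card F"
    using card_image inj_on_subset[OF inj_on_image_edges assms] by blast
  moreover have "card {{g x, n}, {g y, n}} = 2"
    using joins_distinct by (auto simp: doubleton_eq_iff)
  moreover have "(`) g ` F \<inter> {{g x, n}, {g y, n}} = {}"
    using fresh_edge[OF assms] by blast
  moreover have "finite F"
    using assms graph_finite_edges[OF graph] finite_subset by blast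
  ultimately show ?thesis
    unfolding summand_E_def using card_Un_disjoint[of "(`) g ` F" "{{g x, n}, {g y, n}}"]
    by simp
qed

lemma prime_edges_summand:
  assumes "F \<subseteq> E"
  shows "prime_edges (summand_E F) n (g x) (g y) = (`) g ` (F - {{x, y}})"
proof -
  have "{e \<in> summand_E F. n \<notin> e} = (`) g ` F"
    unfolding summand_E_def using fresh_edge[OF assms] by auto
  moreover have "(`) g ` F - {g ` {x, y}} = (`) g ` (F - {{x, y}})"
    using inj_on_image_set_diff[OF inj_on_image_Pow[OF inj_g], of F "{{x, y}}"]
      assms edges_Pow x_in y_in by auto
  ultimately show ?thesis
    unfolding prime_edges_def by simp
qed

lemma joins_edge_summand:
  assumes "F \<subseteq> E"
  shows "{g x, g y} \<in> summand_E F \<longleftrightarrow> {x, y} \<in> F"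
proof -
  have "{g x, g y} \<in> (`) g ` F \<longleftrightarrow> {x, y} \<in> F"
    using inj_on_image_mem_iff[OF inj_on_image_Pow[OF inj_g], of "{x, y}" F]
      assms edges_Pow x_in y_in by auto
  then show ?thesis
    unfolding summand_E_def using joins_distinct by (auto simp: doubleton_eq_iff)
qed

lemma joins_not_in_B: "x \<notin> B" "y \<notin> B"
  using cover by auto

lemma lift_A_side: "v \<in> A \<union> {x, y} \<Longrightarrow> lift v = Inl (g v)"
  using disjoint joins_not_in_B unfolding lift_def by auto

lemma lift_B_side: "v \<in> B \<union> {x, y} \<Longrightarrow> glue2 (g x) (g y) (g x) (g y) (g v) = lift v"
  using joins_not_in_B joins_distinct cover inj_g x_in y_in
  unfolding lift_def glue2_def by (auto dest: inj_onD)

lemma unlift_lift: "v \<in> V \<Longrightarrow> unlift (lift v) = v"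
  unfolding unlift_def lift_def by (simp add: the_inv_into_f_f[OF inj_g])

lemma two_sum_V_summands:
  "two_sum_V (summand_V A) n (g x) (g y) (summand_V B) n (g x) (g y) = lift ` V"
proof -
  have "summand_V A - {n} = g ` (A \<union> {x, y})" "summand_V B - {n} = g ` (B \<union> {x, y})"
    unfolding summand_V_def using cover fresh x_in y_in by auto
  then have "two_sum_V (summand_V A) n (g x) (g y) (summand_V B) n (g x) (g y)
      = Inl ` g ` (A \<union> {x, y}) \<union> glue2 (g x) (g y) (g x) (g y) ` g ` (B \<union> {x, y})"
    unfolding two_sum_V_def by (simp only:)
  also have "Inl ` g ` (A \<union> {x, y}) = lift ` (A \<union> {x, y})"
    unfolding image_image by (rule image_cong[OF refl]) (simp add: lift_A_side)
  also have "glue2 (g x) (g y) (g x) (g y) ` g ` (B \<union> {x, y}) = lift ` (B \<union> {x, y})"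
    unfolding image_image by (rule image_cong[OF refl]) (rule lift_B_side)
  also have "lift ` (A \<union> {x, y}) \<union> lift ` (B \<union> {x, y}) = lift ` V"
    unfolding image_Un[symmetric] using cover x_in y_in by (intro arg_cong[where f = "image lift"]) auto
  finally show ?thesis .
qed

lemma two_sum_E_summands:
  "two_sum_E (summand_E EA) n (g x) (g y) (summand_E EB) n (g x) (g y) = (`) lift ` E"
proof -
  have EA: "EA \<subseteq> E" "\<Union>EA \<subseteq> A \<union> {x, y}" and EB: "EB \<subseteq> E" "\<Union>EB \<subseteq> B \<union> {x, y}"
    unfolding EA_def side_edges_def by auto
  have joins_edge: "{x, y} \<in> EA \<longleftrightarrow> {x, y} \<in> E" "EB - {{x, y}} = EB"
    unfolding EA_def side_edges_def by auto
  have "({g x, g y} \<in> summand_E EA \<or> {g x, g y} \<in> summand_E EB) \<longleftrightarrow> {x, y} \<in> E"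
    using joins_edge_summand[OF EA(1)] joins_edge_summand[OF EB(1)] joins_edge by auto
  then have "two_sum_E (summand_E EA) n (g x) (g y) (summand_E EB) n (g x) (g y)
      = (`) Inl ` (`) g ` (EA - {{x, y}}) \<union> (`) (glue2 (g x) (g y) (g x) (g y)) ` (`) g ` EB \<union>
        (if {x, y} \<in> E then {{Inl (g x), Inl (g y)}} else {})"
    unfolding two_sum_E_def prime_edges_summand[OF EA(1)] prime_edges_summand[OF EB(1)] joins_edge(2)
    by (simp only:)
  also have "(`) Inl ` (`) g ` (EA - {{x, y}}) = (`) lift ` (EA - {{x, y}})"
    using EA(2) by (intro image_edges_comp_cong) (auto simp: lift_A_side)
  also have "(`) (glue2 (g x) (g y) (g x) (g y)) ` (`) g ` EB = (`) lift ` EB"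
    using EB(2) by (intro image_edges_comp_cong) (auto simp: lift_B_side)
  also have "{Inl (g x), Inl (g y)} = lift ` {x, y}"
    using lift_A_side by simp
  also have "(`) lift ` (EA - {{x, y}}) \<union> (`) lift ` EB \<union> (if {x, y} \<in> E then {lift ` {x, y}} else {})
      = (`) lift ` ((EA - {{x, y}}) \<union> EB \<union> (if {x, y} \<in> E then {{x, y}} else {}))"
    by (cases "{x, y} \<in> E") (simp_all add: image_Un)
  also have "(EA - {{x, y}}) \<union> EB \<union> (if {x, y} \<in> E then {{x, y}} else {}) = E"
    using edges_split joins_edge(1) by auto
  finally show ?thesis .
qed

lemma graph_iso_two_sum:
  "graph_iso (two_sum_V (summand_V A) n (g x) (g y) (summand_V B) n (g x) (g y))
     (two_sum_E (summand_E EA) n (g x) (g y) (summand_E EB) n (g x) (g y)) V E unlift"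
  unfolding two_sum_V_summands two_sum_E_summands
  by (rule graph_iso_left_inverse[OF edges_Pow]) (rule unlift_lift)

end

context pair_split
begin

text \<open>A summand has the edges of its side plus two, so it is smaller than \<open>G\<close> exactly when the
  other side has at least three edges.\<close>

lemma admissible_2cut_if_sides_large:
  assumes "two_connected V E" "3 \<le> card EA" "3 \<le> card EB"
  shows "admissible_2cut V E x y"
proof -
  obtain g :: "'a \<Rightarrow> nat" where g: "bij_betw g V {0..<card V}"
    using ex_bij_betw_finite_nat graph unfolding graph_def by blast
  interpret pair_split_embedding V E x y A B g "card V"
    using g by unfold_locales (auto simp: bij_betw_def)
  have sides: "EA \<subseteq> {e \<in> E. e \<subseteq> A \<union> {x, y}}" "EB \<subseteq> {e \<in> E. e \<subseteq> B \<union> {x, y}}"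
    unfolding EA_def side_edges_def by auto
  have "A \<subseteq> V" "B \<subseteq> V"
    using cover by auto
  have sub: "EA \<subseteq> E" "EB \<subseteq> E"
    using edges_split by blast+
  have "graph (summand_V A) (summand_E EA)" "graph (summand_V B) (summand_E EB)"
    using graph_summand \<open>A \<subseteq> V\<close> \<open>B \<subseteq> V\<close> sides by blast+
  moreover have "sum_vertex (summand_V A) (summand_E EA) (card V) (g x) (g y)"
    "sum_vertex (summand_V B) (summand_E EB) (card V) (g x) (g y)"
    using sum_vertex_summand sub by blast+
  moreover have "card (summand_E EA) < card E" "card (summand_E EB) < card E"
    using card_summand_E sub assms(2,3) card_edges_split by fastforce+
  moreover have "unlift ` {Inl (g x), Inl (g y)} = {x, y}"
    using unlift_lift[OF x_in] unlift_lift[OF y_in] lift_A_side[of x] lift_A_side[of y] by simp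
  ultimately show ?thesis
    by (rule admissible_2cutI[OF assms(1) _ _ _ _ _ _ graph_iso_two_sum])
qed

end

section \<open>The graphs \<open>K\<^sub>2\<^sub>,\<^sub>3\<close> and \<open>K\<^sub>4 - e\<close>\<close>

lemma K23_E_eq: "K23_E = {{0, 2}, {0, 3}, {0, 4}, {1, 2}, {1, 3}, {1, 4}}"
  unfolding K23_E_def by auto

lemma K4e_E_eq: "K4e_E = {{0, 2}, {0, 3}, {1, 2}, {1, 3}, {2, 3}}"
proof -
  have "{{i, j} | i j. i \<in> {0..3::nat} \<and> j \<in> {0..3} \<and> i \<noteq> j}
      = {{0, 1}, {0, 2}, {0, 3}, {1, 2}, {1, 3}, {2, 3}}" (is "?K4 = ?list")
  proof
    show "?K4 \<subseteq> ?list"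
    proof
      fix e assume "e \<in> ?K4"
      then obtain i j :: nat where "e = {i, j}" "i \<le> 3" "j \<le> 3" "i \<noteq> j"
        by auto
      moreover have "i = 0 \<or> i = 1 \<or> i = 2 \<or> i = 3" "j = 0 \<or> j = 1 \<or> j = 2 \<or> j = 3"
        using calculation by auto
      ultimately show "e \<in> ?list"
        by (elim disjE) (simp_all add: insert_commute)
    qed
    have "{i, j} \<in> ?K4" if "i \<le> 3" "j \<le> 3" "i \<noteq> j" for i j :: nat
      using that by auto
    then show "?list \<subseteq> ?K4"
      by simp
  qed
  then show ?thesis
    unfolding K4e_E_def by (auto simp: doubleton_eq_iff)
qed

lemma isomorphic_K23I:
  assumes "distinct [x, y, a, b, c]" "V = {x, y, a, b, c}"
    "E = {{a, x}, {a, y}, {b, x}, {b, y}, {c, x}, {c, y}}"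
  shows "isomorphic V E K23_V K23_E"
proof -
  define f :: "'a \<Rightarrow> nat" where
    "f v = (if v = x then 0 else if v = y then 1 else if v = a then 2 else if v = b then 3 else 4)" for v
  have f: "f x = 0" "f y = 1" "f a = 2" "f b = 3" "f c = 4"
    using assms(1) unfolding f_def by auto
  show ?thesis
  proof (rule isomorphicI)
    show "inj_on f V"
      unfolding assms(2) inj_on_def using f by simp
    show "E \<subseteq> Pow V" "f ` V = K23_V" "(`) f ` E = K23_E"
      unfolding assms(2,3) K23_V_def K23_E_eq using f by (auto simp: insert_commute)
  qed
qed

lemma isomorphic_K4eI:
  assumes "distinct [x, y, a, b]" "V = {x, y, a, b}"
    "E = {{x, y}, {a, x}, {a, y}, {b, x}, {b, y}}"
  shows "isomorphic V E K4e_V K4e_E"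
proof -
  \<comment> \<open>the non-edge \<open>ab\<close> goes to the missing edge \<open>{0, 1}\<close>\<close>
  define f :: "'a \<Rightarrow> nat" where
    "f v = (if v = a then 0 else if v = b then 1 else if v = x then 2 else 3)" for v
  have f: "f a = 0" "f b = 1" "f x = 2" "f y = 3"
    using assms(1) unfolding f_def by auto
  show ?thesis
  proof (rule isomorphicI)
    show "inj_on f V"
      unfolding assms(2) inj_on_def using f by simp
    show "E \<subseteq> Pow V" "f ` V = K4e_V" "(`) f ` E = K4e_E"
      unfolding assms(2,3) K4e_V_def K4e_E_eq using f by (auto simp: insert_commute)
  qed
qed

section \<open>The components of \<open>G - {x, y}\<close>\<close>

locale two_connected_cut =
  fixes V :: "'a set" and E :: "'a set set" and x y :: 'a
  assumes graph: "graph V E" and two_connected: "two_connected V E"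
    and x_in: "x \<in> V" and y_in: "y \<in> V" and x_ne_y: "x \<noteq> y"
begin

abbreviation cut_components :: "'a set set" where
  "cut_components \<equiv> components (V - {x, y}) (del_edges E {x, y})"

lemma finite_cut_components: "finite cut_components"
  using graph by (simp add: graph_def finite_components)

lemma card_cut_component_pos:
  assumes C: "C \<in> cut_components"
  shows "1 \<le> card C"
proof -
  have "finite C"
    using components_subset[OF C] graph finite_subset unfolding graph_def by blast
  then show ?thesis
    using components_nonempty[OF C] by (simp add: Suc_le_eq card_gt_0_iff)
qed

lemma cut_component_neighbours:
  assumes "C \<in> cut_components"
  shows "\<exists>u\<in>C. {u, x} \<in> E" "\<exists>u\<in>C. {u, y} \<in> E"
proof -
  have conn: "connected_graph (V - {v}) (del_edges E {v})" if "v \<in> V" for v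
    using two_connected that unfolding two_connected_def by blast
  show "\<exists>u\<in>C. {u, x} \<in> E"
    using cut_component_has_neighbour[OF graph conn[OF y_in] assms x_in x_ne_y] .
  have "C \<in> components (V - {y, x}) (del_edges E {y, x})"
    using assms by (simp add: insert_commute)
  then show "\<exists>u\<in>C. {u, y} \<in> E"
    using cut_component_has_neighbour[OF graph conn[OF x_in] _ y_in] x_ne_y by blast
qed

lemma cut_component_edge_closed:
  assumes "C \<in> cut_components" "u \<in> C" "{u, v} \<in> E" "v \<notin> {x, y}"
  shows "v \<in> C"
proof -
  have "v \<in> V"
    using graph_edges_subset[OF graph] assms(3) by blast
  moreover have "{u, v} \<in> del_edges E {x, y}"
    using assms components_subset[OF assms(1)] by (intro del_edgesI) auto
  ultimately show ?thesis
    using components_edge_closed[OF assms(1,2)] assms(4) by blast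
qed

lemma cut_component_inner_edge:
  assumes C: "C \<in> cut_components" and "2 \<le> card C"
  shows "\<exists>u\<in>C. \<exists>w\<in>C. u \<noteq> w \<and> {u, w} \<in> E"
proof -
  have "finite C"
    using components_subset[OF C] graph finite_subset unfolding graph_def by blast
  moreover have "\<not> card C \<le> Suc 0"
    using assms(2) by simp
  ultimately obtain a b where ab: "a \<in> C" "b \<in> C" "a \<noteq> b"
    using card_le_Suc0_iff_eq by blast
  obtain u w where uw: "(u, w) \<in> adj (del_edges E {x, y})" "u \<in> {a}" "w \<notin> {a}"
    using rtrancl_exits_set[OF components_reachable[OF C ab(1,2)], of "{a}"] ab(3) by blast
  then have "{a, w} \<in> E" "w \<notin> {x, y}"
    unfolding adj_def del_edges_def by auto
  then have "w \<in> C"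
    using cut_component_edge_closed[OF C ab(1)] by blast
  moreover have "a \<noteq> w"
    using uw(3) by simp
  ultimately show ?thesis
    using ab(1) \<open>{a, w} \<in> E\<close> by blast
qed

lemma edge_in_cut_component:
  assumes "e \<in> E" "e \<noteq> {x, y}"
  shows "\<exists>C\<in>cut_components. e \<subseteq> C \<union> {x, y}"
proof -
  obtain u v where uv: "e = {u, v}" "u \<noteq> v" "u \<in> V" "v \<in> V"
    using graph assms(1) by (elim graph_edgeE)
  have "u \<notin> {x, y} \<or> v \<notin> {x, y}"
    using uv assms(2) by auto
  then obtain w w' where ww': "e = {w, w'}" "w \<in> V - {x, y}"
  proof
    assume "u \<notin> {x, y}"
    then show thesis using that[of u v] uv by blast
  next
    assume "v \<notin> {x, y}"
    then show thesis using that[of v u] uv by (simp add: insert_commute)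
  qed
  then obtain C where C: "C \<in> cut_components" "w \<in> C"
    using Union_components[of "V - {x, y}" "del_edges E {x, y}"] by blast
  then have "w' \<in> C \<union> {x, y}"
    using cut_component_edge_closed[OF C] ww' assms(1) by blast
  with C ww'(1) show ?thesis by blast
qed

lemma finite_side_edges: "finite (side_edges E x y S)"
  using graph_finite_edges[OF graph] unfolding side_edges_def by simp

lemma card_side_edges_component:
  assumes C: "C \<in> cut_components"
  shows "2 \<le> card (side_edges E x y C)"
proof -
  obtain u u' where u: "u \<in> C" "{u, x} \<in> E" and u': "u' \<in> C" "{u', y} \<in> E"
    using cut_component_neighbours[OF C] by blast
  have "u \<notin> {x, y}" "u' \<notin> {x, y}"
    using u(1) u'(1) components_subset[OF C] by auto
  then have "{{u, x}, {u', y}} \<subseteq> side_edges E x y C" "card {{u, x}, {u', y}} = 2"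
    using u u' x_ne_y unfolding side_edges_def by (auto simp: doubleton_eq_iff)
  then show ?thesis
    using card_mono[OF finite_side_edges] by metis
qed

lemma card_side_edges_nontrivial_component:
  assumes C: "C \<in> cut_components" and "2 \<le> card C"
  shows "3 \<le> card (side_edges E x y C)"
proof -
  obtain u u' where u: "u \<in> C" "{u, x} \<in> E" and u': "u' \<in> C" "{u', y} \<in> E"
    using cut_component_neighbours[OF C] by blast
  obtain a w where aw: "a \<in> C" "w \<in> C" "a \<noteq> w" "{a, w} \<in> E"
    using cut_component_inner_edge[OF assms] by blast
  have "u \<notin> {x, y}" "u' \<notin> {x, y}" "a \<notin> {x, y}" "w \<notin> {x, y}"
    using u(1) u'(1) aw(1,2) components_subset[OF C] by auto
  then have "{{u, x}, {u', y}, {a, w}} \<subseteq> side_edges E x y C"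
    "card {{u, x}, {u', y}, {a, w}} = 3"
    using u u' aw x_ne_y unfolding side_edges_def by (auto simp: doubleton_eq_iff)
  then show ?thesis
    using card_mono[OF finite_side_edges] by metis
qed

lemma admissible_if_components_split:
  assumes T: "T \<subseteq> cut_components"
    and "3 \<le> card (side_edges E x y (\<Union>T)) + (if {x, y} \<in> E then 1 else 0)"
    and "3 \<le> card (side_edges E x y (\<Union>(cut_components - T)))"
  shows "admissible_2cut V E x y"
proof -
  have "C \<inter> D = {}" if "C \<in> T" "D \<in> cut_components - T" for C D
    using components_disjoint[of C _ _ D] T that by blast
  then have disjoint: "\<Union>T \<inter> \<Union>(cut_components - T) = {}"
    by blast
  have "\<Union>T \<union> \<Union>(cut_components - T) = \<Union>cut_components"
    using T by blast
  then have cover: "\<Union>T \<union> \<Union>(cut_components - T) = V - {x, y}"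
    by (simp only: Union_components)
  have sides: "e \<subseteq> \<Union>T \<union> {x, y} \<or> e \<subseteq> \<Union>(cut_components - T) \<union> {x, y}" if e: "e \<in> E" for e
  proof (cases "e = {x, y}")
    case False
    then obtain C where "C \<in> cut_components" "e \<subseteq> C \<union> {x, y}"
      using edge_in_cut_component[OF e] by blast
    then show ?thesis
      by (cases "C \<in> T") blast+
  qed simp
  interpret pair_split V E x y "\<Union>T" "\<Union>(cut_components - T)"
    using graph x_in y_in x_ne_y disjoint cover sides by unfold_locales
  have "card EA = card (side_edges E x y (\<Union>T)) + (if {x, y} \<in> E then 1 else 0)"
    unfolding EA_def by (rule card_edges_within[OF graph_finite_edges[OF graph]])
  then show ?thesis
    using admissible_2cut_if_sides_large[OF two_connected] assms(2,3) by simp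
qed

lemma card_side_edges_Union_nonempty:
  assumes "T \<subseteq> cut_components" "T \<noteq> {}"
  shows "2 \<le> card (side_edges E x y (\<Union>T))"
proof -
  obtain C where C: "C \<in> T"
    using assms(2) by blast
  then have "2 \<le> card (side_edges E x y C)"
    using card_side_edges_component assms(1) by blast
  also have "\<dots> \<le> card (side_edges E x y (\<Union>T))"
    using C by (intro card_mono[OF finite_side_edges] side_edges_mono) blast
  finally show ?thesis .
qed

lemma card_side_edges_Union:
  assumes T: "T \<subseteq> cut_components" and "2 \<le> card T"
  shows "4 \<le> card (side_edges E x y (\<Union>T))"
proof -
  have "finite T"
    using T finite_cut_components finite_subset by blast
  moreover have "\<not> card T \<le> Suc 0"
    using assms(2) by simp
  ultimately obtain C D where CD: "C \<in> T" "D \<in> T" "C \<noteq> D"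
    using card_le_Suc0_iff_eq by blast
  then have C: "C \<in> cut_components" and D: "D \<in> cut_components"
    using T by auto
  have "side_edges E x y C \<inter> side_edges E x y D = {}"
    using side_edges_disjoint[OF graph components_disjoint[OF C D \<open>C \<noteq> D\<close>]] .
  then have "card (side_edges E x y C) + card (side_edges E x y D)
      = card (side_edges E x y C \<union> side_edges E x y D)"
    using card_Un_disjoint[OF finite_side_edges finite_side_edges] by simp
  also have "\<dots> \<le> card (side_edges E x y (\<Union>T))"
    using CD by (intro card_mono[OF finite_side_edges] Un_least side_edges_mono) auto
  finally show ?thesis
    using card_side_edges_component[OF C] card_side_edges_component[OF D] by linarith
qed

lemma singleton_components_eq:
  assumes "\<forall>C\<in>cut_components. card C = 1"
  shows "cut_components = (\<lambda>a. {a}) ` (V - {x, y})"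
proof
  show "cut_components \<subseteq> (\<lambda>a. {a}) ` (V - {x, y})"
    using assms components_subset by (fastforce elim!: card_1_singletonE)
  show "(\<lambda>a. {a}) ` (V - {x, y}) \<subseteq> cut_components"
  proof
    fix C assume "C \<in> (\<lambda>a. {a}) ` (V - {x, y})"
    then obtain a where a: "a \<in> V - {x, y}" "C = {a}" by blast
    then obtain D where D: "D \<in> cut_components" "a \<in> D"
      using Union_components[of "V - {x, y}" "del_edges E {x, y}"] by blast
    then have "D = {a}"
      using assms by (metis card_1_singletonE singletonD)
    with D a show "C \<in> cut_components" by simp
  qed
qed

lemma edges_if_singleton_components:
  assumes "\<forall>C\<in>cut_components. card C = 1"
  shows "E - {{x, y}} = (\<Union>a\<in>V - {x, y}. {{a, x}, {a, y}})"
proof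
  show "E - {{x, y}} \<subseteq> (\<Union>a\<in>V - {x, y}. {{a, x}, {a, y}})"
  proof
    fix e assume e: "e \<in> E - {{x, y}}"
    then obtain C where "C \<in> cut_components" "e \<subseteq> C \<union> {x, y}"
      using edge_in_cut_component by blast
    moreover obtain u v where "e = {u, v}" "u \<noteq> v"
      using graph e by (blast elim: graph_edgeE)
    ultimately obtain a where "a \<in> V - {x, y}" "e \<subseteq> {a, x, y}"
      using assms singleton_components_eq by auto
    with e \<open>e = {u, v}\<close> \<open>u \<noteq> v\<close> show "e \<in> (\<Union>a\<in>V - {x, y}. {{a, x}, {a, y}})"
      by (auto simp: doubleton_eq_iff)
  qed
  show "(\<Union>a\<in>V - {x, y}. {{a, x}, {a, y}}) \<subseteq> E - {{x, y}}"
  proof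
    fix e assume "e \<in> (\<Union>a\<in>V - {x, y}. {{a, x}, {a, y}})"
    then obtain a where a: "a \<in> V - {x, y}" "e = {a, x} \<or> e = {a, y}" by blast
    then have "{a} \<in> cut_components"
      using assms singleton_components_eq by blast
    then have "{a, x} \<in> E" "{a, y} \<in> E"
      using cut_component_neighbours by auto
    with a show "e \<in> E - {{x, y}}"
      by (auto simp: doubleton_eq_iff)
  qed
qed

lemma card_cut_vertices_if_singleton_components:
  assumes "\<forall>C\<in>cut_components. card C = 1"
  shows "card (V - {x, y}) = card cut_components"
  unfolding singleton_components_eq[OF assms] by (simp add: card_image)

lemma K23_if_not_admissible:
  assumes not_adm: "\<not> admissible_2cut V E x y" and k: "3 \<le> card cut_components"
  shows "isomorphic V E K23_V K23_E"
proof -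
  have rest: "4 \<le> card (side_edges E x y (\<Union>(cut_components - {C})))" if "C \<in> cut_components" for C
    using card_side_edges_Union[of "cut_components - {C}"] k that finite_cut_components by simp
  obtain C0 where C0: "C0 \<in> cut_components"
    using k by fastforce
  have no_xy: "{x, y} \<notin> E"
  proof
    assume "{x, y} \<in> E"
    then show False
      using admissible_if_components_split[of "{C0}"] card_side_edges_component[OF C0] rest[OF C0]
        C0 not_adm by simp
  qed
  have singletons: "\<forall>C\<in>cut_components. card C = 1"
  proof (rule ccontr)
    assume "\<not> ?thesis"
    then obtain C where C: "C \<in> cut_components" "2 \<le> card C"
      using card_cut_component_pos by fastforce
    then show False
      using admissible_if_components_split[of "{C}"] card_side_edges_nontrivial_component[OF C]
        rest[OF C(1)] not_adm by simp
  qed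
  have "card cut_components = 3"
  proof (rule ccontr)
    assume "card cut_components \<noteq> 3"
    then have "2 \<le> card cut_components"
      using k by simp
    then obtain T where T: "T \<subseteq> cut_components" "card T = 2" "finite T"
      by (rule obtain_subset_with_card_n)
    moreover have "card (cut_components - T) = card cut_components - 2"
      using card_Diff_subset[OF T(3,1)] T(2) by simp
    ultimately have "2 \<le> card (cut_components - T)"
      using k \<open>card cut_components \<noteq> 3\<close> by simp
    then show False
      using admissible_if_components_split[OF T(1)] card_side_edges_Union[OF T(1)]
        card_side_edges_Union[of "cut_components - T"] T(2) not_adm by simp
  qed
  then obtain a b c where abc: "V - {x, y} = {a, b, c}" "a \<noteq> b" "a \<noteq> c" "b \<noteq> c"
    using card_cut_vertices_if_singleton_components[OF singletons] card_3_iff by metis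
  then have "distinct [x, y, a, b, c]" "V = {x, y, a, b, c}"
    using x_in y_in x_ne_y by auto
  moreover have "E = {{a, x}, {a, y}, {b, x}, {b, y}, {c, x}, {c, y}}"
    using edges_if_singleton_components[OF singletons] no_xy abc(1) by auto
  ultimately show ?thesis
    by (rule isomorphic_K23I)
qed

lemma nontrivial_component_admissible:
  assumes C: "C \<in> cut_components" "2 \<le> card C"
    and rest: "3 \<le> card (side_edges E x y (\<Union>(cut_components - {C}))) + (if {x, y} \<in> E then 1 else 0)"
  shows "admissible_2cut V E x y"
  using admissible_if_components_split[of "cut_components - {C}"] rest
    card_side_edges_nontrivial_component[OF C] C(1) by (simp add: Diff_Diff_Int insert_absorb)

lemma K4e_if_not_admissible:
  assumes not_adm: "\<not> admissible_2cut V E x y" and k: "card cut_components = 2" and xy: "{x, y} \<in> E"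
  shows "isomorphic V E K4e_V K4e_E"
proof -
  have singletons: "\<forall>C\<in>cut_components. card C = 1"
  proof (rule ccontr)
    assume "\<not> ?thesis"
    then obtain C where C: "C \<in> cut_components" "2 \<le> card C"
      using card_cut_component_pos by fastforce
    have "card (cut_components - {C}) = 1"
      using card_Diff_singleton[OF C(1)] k by simp
    then have "cut_components - {C} \<noteq> {}"
      by (cases "cut_components - {C} = {}") simp_all
    then show False
      using nontrivial_component_admissible[OF C] card_side_edges_Union_nonempty[of "cut_components - {C}"]
        xy not_adm by simp
  qed
  then have "card (V - {x, y}) = 2"
    using card_cut_vertices_if_singleton_components k by simp
  then obtain a b where ab: "V - {x, y} = {a, b}" "a \<noteq> b"
    unfolding card_2_iff by blast
  then have "distinct [x, y, a, b]" "V = {x, y, a, b}"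
    using x_in y_in x_ne_y by auto
  moreover have "E = {{x, y}, {a, x}, {a, y}, {b, x}, {b, y}}"
  proof -
    have "E = insert {x, y} (E - {{x, y}})"
      using xy by blast
    then show ?thesis
      unfolding edges_if_singleton_components[OF singletons] ab(1) by (simp add: insert_commute)
  qed
  ultimately show ?thesis
    by (rule isomorphic_K4eI)
qed

lemma trivial_component_if_not_admissible:
  assumes not_adm: "\<not> admissible_2cut V E x y" and k: "card cut_components = 2" and xy: "{x, y} \<notin> E"
  shows "\<exists>C\<in>cut_components. card C = 1"
proof (rule ccontr)
  assume "\<not> ?thesis"
  then have nontrivial: "2 \<le> card C" if "C \<in> cut_components" for C
    using card_cut_component_pos[OF that] that by fastforce
  obtain C D where CD: "cut_components = {C, D}" "C \<noteq> D"
    using k card_2_iff by metis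
  then have "cut_components - {C} = {D}"
    by auto
  then show False
    using nontrivial_component_admissible[of C] card_side_edges_nontrivial_component[of D]
      nontrivial CD xy not_adm by simp
qed

end

theorem mainTheorem5:
  fixes V :: "'a set" and E :: "'a set set" and x y :: 'a and k :: nat
  assumes "graph V E"
    and "two_connected V E"
    and "x \<in> V" and "y \<in> V"
    and "k = card (components (V - {x, y}) (del_edges E {x, y}))"
    and "k \<ge> 2"
    and "\<not> admissible_2cut V E x y"
  shows "(k \<ge> 3 \<longrightarrow> isomorphic V E K23_V K23_E)
       \<and> (k = 2 \<and> {x, y} \<in> E \<longrightarrow> isomorphic V E K4e_V K4e_E)
       \<and> (k = 2 \<and> {x, y} \<notin> E \<longrightarrow>
            (\<exists>C \<in> components (V - {x, y}) (del_edges E {x, y}). card C = 1))"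
proof -
  have "x \<noteq> y"
  proof
    assume "x = y"
    then have "connected_graph (V - {x, y}) (del_edges E {x, y})"
      using assms(2,3) unfolding two_connected_def by simp
    then show False
      using card_components_connected assms(5,6) by fastforce
  qed
  then interpret two_connected_cut V E x y
    using assms(1-4) by unfold_locales
  show ?thesis
    using K23_if_not_admissible K4e_if_not_admissible trivial_component_if_not_admissible
      assms(5,7) by simp
qed

end
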